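(* Let $d\in\mathbb{N}$ and let $f\in\mathbb{R}[x]$ be a univariate polynomial of degree at most $d$ that is positive on $[-1,1]$, with minimum and maximum values $0<f_{\min}<f_{\max}$ on $[-1,1]$. Let $r\in\mathbb{N}$, $r\ge2$, satisfy \[ \frac{r}{\log r}\ge 10\sqrt{35}\left(1+\tfrac{1}{\sqrt2}\right)d^{5/2}\quad\text{and}\quad \frac{r}{\log r}\ge 150\,d^{5/2}\frac{f_{\max}}{f_{\min}}. \] Then $f+\epsilon\in\mathcal Q(1-x^2)_{2t}$, where $t=O(r)$ and $\epsilon=O(\|f\|_{1,\mathrm{cheb}}\log(r)/r^2)$. In particular, one may take \[ t=104r,\qquad \epsilon=\left(\tfrac72 d^{9/2}+14\right)\|f\|_{1,\mathrm{cheb}}\,\frac{\log r}{r^2}. \]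
   Context: $\Sigma[x]_r$ is the cone of sums of squares of univariate polynomials of degree at most $r$, and $\mathcal Q(1-x^2)_r=\Sigma[x]_r+(1-x^2)\Sigma[x]_{r-2}$. $T_k(x)=\cos(k\arccos x)$ is the Chebyshev polynomial of the first kind; for $p=\sum_k c_kT_k$, $\|p\|_{1,\mathrm{cheb}}=\sum_k|c_k|$. $\log$ is the natural logarithm. *)

theory Defs
  imports "HOL-Analysis.Analysis" "HOL-Computational_Algebra.Polynomial"
begin

definition sos_deg :: "nat \<Rightarrow> real poly set" where
  "sos_deg r = {p. \<exists>qs. p = sum_list (map (\<lambda>q. q ^ 2) qs) \<and> degree p \<le> r}"

definition qmodule_deg :: "nat \<Rightarrow> real poly set" where
  "qmodule_deg r = {s0 + [:1, 0, -1:] * s1 | s0 s1. s0 \<in> sos_deg r \<and> s1 \<in> sos_deg (r - 2)}"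

fun cheb :: "nat \<Rightarrow> real poly" where
  "cheb 0 = 1"
| "cheb (Suc 0) = [:0, 1:]"
| "cheb (Suc (Suc k)) = [:0, 2:] * cheb (Suc k) - cheb k"

definition cheb_coeff :: "real poly \<Rightarrow> nat \<Rightarrow> real" where
  "cheb_coeff p = (THE c. (\<forall>k>degree p. c k = 0) \<and>
                          p = (\<Sum>k\<le>degree p. smult (c k) (cheb k)))"

definition cheb_norm1 :: "real poly \<Rightarrow> real" where
  "cheb_norm1 p = (\<Sum>k\<le>degree p. \<bar>cheb_coeff p k\<bar>)"

end

theory Submission
  imports Defs "HOL-Computational_Algebra.Fundamental_Theorem_Algebra"
begin

(* Over the reals, a polynomial positive on [-1, 1] factors into linear factors whose roots lie
   outside [-1, 1] and quadratics (x - u)^2 + v^2 with v <> 0. After fixing signs, every factor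
   has a certificate of degree 2 in the quadratic module of g = 1 - x^2, and certificates multiply:
   (s0 + g s1)(t0 + g t1) = (s0 t0 + g^2 s1 t1) + g (s0 t1 + s1 t0). Hence a polynomial of degree n
   positive on [-1, 1] lies in Q(1 - x^2)_2n. As epsilon >= 0, f + epsilon is such a polynomial of
   degree at most d, and the first hypothesis on r forces d <= r. *)

definition sums_of_squares :: "'a::comm_ring_1 set" where
  "sums_of_squares = {sum_list (map (\<lambda>q. q ^ 2) qs) | qs. True}"

lemma zero_in_sums_of_squares [simp]: "0 \<in> sums_of_squares"
  unfolding sums_of_squares_def by (auto intro!: exI[of _ "[]"])

lemma square_in_sums_of_squares [simp]: "q ^ 2 \<in> sums_of_squares"
  unfolding sums_of_squares_def by (auto intro!: exI[of _ "[q]"])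

lemma sums_of_squares_add:
  assumes "a \<in> sums_of_squares" "b \<in> sums_of_squares"
  shows "a + b \<in> sums_of_squares"
proof -
  obtain qs rs where "a = sum_list (map (\<lambda>q. q ^ 2) qs)" "b = sum_list (map (\<lambda>q. q ^ 2) rs)"
    using assms unfolding sums_of_squares_def by blast
  then have "a + b = sum_list (map (\<lambda>q. q ^ 2) (qs @ rs))" by simp
  then show ?thesis unfolding sums_of_squares_def by blast
qed

lemma sums_of_squares_mult:
  assumes "a \<in> sums_of_squares" "b \<in> sums_of_squares"
  shows "a * b \<in> sums_of_squares"
proof -
  obtain qs rs where a: "a = sum_list (map (\<lambda>q. q ^ 2) qs)"
    and b: "b = sum_list (map (\<lambda>q. q ^ 2) rs)"
    using assms unfolding sums_of_squares_def by blast
  have "a * b = sum_list (map (\<lambda>q. q ^ 2) (concat (map (\<lambda>q. map ((*) q) rs) qs)))"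
    unfolding a b by (induction qs) (simp_all add: sum_list_const_mult o_def algebra_simps)
  then show ?thesis unfolding sums_of_squares_def by blast
qed

lemma nonneg_const_in_sums_of_squares:
  "0 \<le> c \<Longrightarrow> [:c:] \<in> (sums_of_squares :: real poly set)"
  using square_in_sums_of_squares[of "[:sqrt c:]"] by (simp add: power2_eq_square)

(* Bounding deg (g s1) rather than deg s1 by D - 2 (as qmodule_deg does) makes these sets closed
   under multiplication. *)
definition qmodule_trunc :: "'a::comm_ring_1 poly \<Rightarrow> nat \<Rightarrow> 'a poly set" where
  "qmodule_trunc g D = {s0 + g * s1 | s0 s1. s0 \<in> sums_of_squares \<and> s1 \<in> sums_of_squares
                          \<and> degree s0 \<le> D \<and> degree (g * s1) \<le> D}"

lemma qmodule_trunc_mono: "p \<in> qmodule_trunc g D \<Longrightarrow> D \<le> E \<Longrightarrow> p \<in> qmodule_trunc g E"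
  unfolding qmodule_trunc_def by force

lemma sums_of_squares_in_qmodule_trunc:
  "s \<in> sums_of_squares \<Longrightarrow> degree s \<le> D \<Longrightarrow> s \<in> qmodule_trunc g D"
  unfolding qmodule_trunc_def by (intro CollectI exI[of _ s] exI[of _ 0]) simp

lemma qmodule_trunc_mult:
  assumes "p \<in> qmodule_trunc g D" "q \<in> qmodule_trunc g E"
  shows "p * q \<in> qmodule_trunc g (D + E)"
proof -
  obtain s0 s1 where s: "s0 \<in> sums_of_squares" "s1 \<in> sums_of_squares" "p = s0 + g * s1"
    and ds: "degree s0 \<le> D" "degree (g * s1) \<le> D"
    using assms(1) unfolding qmodule_trunc_def by blast
  obtain t0 t1 where t: "t0 \<in> sums_of_squares" "t1 \<in> sums_of_squares" "q = t0 + g * t1"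
    and dt: "degree t0 \<le> E" "degree (g * t1) \<le> E"
    using assms(2) unfolding qmodule_trunc_def by blast
  have deg: "degree (a * b) \<le> D + E" if "degree a \<le> D" "degree b \<le> E" for a b :: "'a poly"
    using degree_mult_le[of a b] that by linarith
  have "p * q = (s0 * t0 + (g * s1) * (g * t1)) + g * (s0 * t1 + s1 * t0)"
    unfolding s(3) t(3) by (simp add: algebra_simps)
  moreover have "s0 * t0 + (g * s1) * (g * t1) \<in> sums_of_squares"
  proof -
    have "(g * s1) * (g * t1) = g ^ 2 * (s1 * t1)" by (simp add: power2_eq_square mult_ac)
    then show ?thesis using s t by (simp add: sums_of_squares_add sums_of_squares_mult)
  qed
  moreover have "s0 * t1 + s1 * t0 \<in> sums_of_squares"
    using s t by (simp add: sums_of_squares_add sums_of_squares_mult)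
  moreover have "degree (s0 * t0 + (g * s1) * (g * t1)) \<le> D + E"
    using deg ds dt by (intro degree_add_le) auto
  moreover have "degree (g * (s0 * t1 + s1 * t0)) \<le> D + E"
  proof -
    have "g * (s0 * t1 + s1 * t0) = s0 * (g * t1) + (g * s1) * t0" by (simp add: algebra_simps)
    then show ?thesis using deg ds dt by (simp add: degree_add_le)
  qed
  ultimately show ?thesis unfolding qmodule_trunc_def by blast
qed

lemma qmodule_trunc_subset_qmodule_deg:
  assumes "D \<le> N"
  shows "qmodule_trunc [:1, 0, -1:] D \<subseteq> qmodule_deg N"
proof
  fix p :: "real poly"
  assume "p \<in> qmodule_trunc [:1, 0, -1:] D"
  then obtain s0 s1 where s: "s0 \<in> sums_of_squares" "s1 \<in> sums_of_squares"
      "p = s0 + [:1, 0, -1:] * s1" "degree s0 \<le> D" "degree ([:1, 0, -1:] * s1) \<le> D"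
    unfolding qmodule_trunc_def by blast
  have "degree s1 \<le> N - 2"
  proof (cases "s1 = 0")
    case False
    then have "degree ([:1, 0, -1:] * s1) = 2 + degree s1"
      using degree_mult_eq[of "[:1, 0, -1:]" s1] by simp
    then show ?thesis using s(5) assms by linarith
  qed simp
  then show "p \<in> qmodule_deg N"
    using s assms unfolding qmodule_deg_def sos_deg_def sums_of_squares_def by fastforce
qed

lemma degree_le_1_eq: "degree p \<le> 1 \<Longrightarrow> p = [:coeff p 0, coeff p 1:]"
  by (intro poly_eqI) (auto simp: coeff_pCons split: nat.splits intro!: coeff_eq_0)

lemma linear_in_qmodule_trunc:
  fixes l :: "real poly"
  assumes "degree l \<le> 1" "0 < poly l (-1)" "0 < poly l 1"
  shows "l \<in> qmodule_trunc [:1, 0, -1:] 2"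
proof -
  define c0 c1 where "c0 = coeff l 0" and "c1 = coeff l 1"
  have l: "l = [:c0, c1:]"
    using degree_le_1_eq[OF assms(1)] unfolding c0_def c1_def .
  have "0 < c0 - c1" "0 < c0 + c1" using assms(2,3) by (simp_all add: l)
  then have c0: "0 < c0" and c1: "c1\<^sup>2 \<le> c0\<^sup>2"
    by (auto simp: abs_le_square_iff[symmetric])
  \<comment> \<open>\<open>2 c\<^sub>0 l = l\<^sup>2 + c\<^sub>1\<^sup>2 (1 - x\<^sup>2) + (c\<^sub>0\<^sup>2 - c\<^sub>1\<^sup>2)\<close>\<close>
  define s0 where "s0 = [:(c0\<^sup>2 - c1\<^sup>2) / (2 * c0):] + (smult (1 / sqrt (2 * c0)) l)\<^sup>2"
  have "l = s0 + [:1, 0, -1:] * [:c1\<^sup>2 / (2 * c0):]"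
    using c0 unfolding s0_def l
    by (simp add: power2_eq_square real_sqrt_mult[symmetric] field_simps)
  moreover have "s0 \<in> sums_of_squares"
    unfolding s0_def using c0 c1
    by (intro sums_of_squares_add nonneg_const_in_sums_of_squares square_in_sums_of_squares) auto
  moreover have "degree s0 \<le> 2"
    unfolding s0_def l by (simp add: power2_eq_square degree_add_le)
  moreover have "[:c1\<^sup>2 / (2 * c0):] \<in> sums_of_squares"
    using c0 by (intro nonneg_const_in_sums_of_squares) auto
  ultimately show ?thesis
    unfolding qmodule_trunc_def by fastforce
qed

lemma sum_of_two_squares_in_qmodule_trunc:
  "[:u\<^sup>2 + v\<^sup>2, -2 * u, 1:] \<in> qmodule_trunc g 2"
proof (rule sums_of_squares_in_qmodule_trunc)
  have "[:u\<^sup>2 + v\<^sup>2, -2 * u, 1:] = [:-u, 1:]\<^sup>2 + [:v:]\<^sup>2"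
    by (simp add: power2_eq_square)
  then show "[:u\<^sup>2 + v\<^sup>2, -2 * u, 1:] \<in> sums_of_squares"
    by (simp add: sums_of_squares_add)
qed simp

lemma map_poly_of_real_add:
  "map_poly of_real (p + q) = (map_poly of_real p + map_poly of_real q :: 'a::real_algebra_1 poly)"
  by (rule poly_eqI) (simp add: coeff_map_poly)

lemma map_poly_of_real_mult:
  "map_poly of_real (p * q) =
     (map_poly of_real p * map_poly of_real q :: 'a::{real_algebra_1, comm_ring_1} poly)"
  by (rule poly_eqI) (simp add: coeff_map_poly coeff_mult)

lemma poly_map_poly_of_real:
  "poly (map_poly of_real p) (of_real x) =
     (of_real (poly p x) :: 'a::{real_algebra_1, comm_ring_1})"
  by (induction p) (simp_all add: map_poly_pCons)

lemma real_poly_conjugate_roots_factor: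
  fixes p :: "real poly" and z :: complex
  assumes root: "poly (map_poly of_real p) z = 0" and nonreal: "Im z \<noteq> 0"
  shows "[:(Re z)\<^sup>2 + (Im z)\<^sup>2, -2 * Re z, 1:] dvd p"
proof (rule ccontr)
  define h where "h = [:(Re z)\<^sup>2 + (Im z)\<^sup>2, -2 * Re z, 1:]"
  define r where "r = p mod h"
  assume "\<not> h dvd p"
  then have "r \<noteq> 0" and "degree r < 2"
    using degree_mod_less_degree[of h p] unfolding r_def h_def by auto
  then obtain a b where r: "r = [:a, b:]"
    using degree_le_1_eq[of r] by auto
  have "poly (map_poly complex_of_real h) z = 0"
    unfolding h_def by (simp add: map_poly_pCons complex_eq_iff power2_eq_square algebra_simps)
  moreover have "map_poly complex_of_real p =
      map_poly of_real h * map_poly of_real (p div h) + map_poly of_real r"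
    unfolding r_def by (subst mult_div_mod_eq[symmetric, of p h])
      (simp only: map_poly_of_real_add map_poly_of_real_mult)
  ultimately have "of_real a + of_real b * z = 0"
    using root by (simp add: r map_poly_pCons mult.commute)
  then have "b * Im z = 0" "a + b * Re z = 0"
    by (simp_all add: complex_eq_iff)
  then show False
    using nonreal \<open>r \<noteq> 0\<close> r by simp
qed

lemma real_poly_quadratic_factor:
  fixes p :: "real poly"
  assumes "0 < degree p" and no_real_root: "\<forall>a. poly p a \<noteq> 0"
  obtains u v where "v \<noteq> 0" "[:u\<^sup>2 + v\<^sup>2, -2 * u, 1:] dvd p"
proof -
  have "degree (map_poly complex_of_real p) = degree p"
    by (simp add: degree_map_poly)
  then obtain z where z: "poly (map_poly complex_of_real p) z = 0"
    using fundamental_theorem_of_algebra constant_degree assms(1) by (metis neq0_conv)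
  have "Im z \<noteq> 0"
  proof
    assume "Im z = 0"
    then have "z = of_real (Re z)" by (simp add: complex_eq_iff)
    then show False
      using z no_real_root poly_map_poly_of_real[where 'a=complex, of p "Re z"]
      by (metis of_real_eq_0_iff)
  qed
  then show ?thesis
    using that real_poly_conjugate_roots_factor[OF z] by blast
qed

lemma positive_on_interval_factor:
  fixes p :: "real poly"
  assumes pos: "\<forall>x\<in>{-1..1}. 0 < poly p x" and "0 < degree p"
  obtains l q where "p = l * q" "0 < degree l" "l \<in> qmodule_trunc [:1, 0, -1:] (2 * degree l)"
    and "\<forall>x\<in>{-1..1}. 0 < poly l x"
proof (cases "\<exists>a. poly p a = 0")
  case True
  then obtain a q where q: "p = [:-a, 1:] * q"
    by (metis dvdE poly_eq_0_iff_dvd)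
  have "a \<notin> {-1..1}"
    using pos q by fastforce
  then have "1 < \<bar>a\<bar>"
    by auto
  define l where "l = smult (- sgn a) [:-a, 1:]"
  have p_l: "p = l * smult (- sgn a) q"
    using \<open>1 < \<bar>a\<bar>\<close> by (auto simp: q l_def sgn_if)
  have l_pos: "\<forall>x\<in>{-1..1}. 0 < poly l x"
    using \<open>1 < \<bar>a\<bar>\<close> by (auto simp: l_def sgn_if)
  have "degree l = 1"
    using \<open>1 < \<bar>a\<bar>\<close> by (auto simp: l_def sgn_if)
  moreover have "l \<in> qmodule_trunc [:1, 0, -1:] 2"
    using l_pos \<open>degree l = 1\<close> by (intro linear_in_qmodule_trunc) auto
  ultimately show ?thesis
    using that[OF p_l _ _ l_pos] by simp
next
  case False
  then obtain u v where "v \<noteq> 0" and "[:u\<^sup>2 + v\<^sup>2, -2 * u, 1:] dvd p"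
    using real_poly_quadratic_factor[OF \<open>0 < degree p\<close>] by blast
  moreover define h where "h = [:u\<^sup>2 + v\<^sup>2, -2 * u, 1:]"
  ultimately obtain q where p_h: "p = h * q"
    by blast
  have h_pos: "0 < poly h x" for x
  proof -
    have "poly h x = (x - u)\<^sup>2 + v\<^sup>2"
      by (simp add: h_def algebra_simps power2_eq_square)
    then show ?thesis
      using \<open>v \<noteq> 0\<close> by (simp add: add_nonneg_pos)
  qed
  have "h \<in> qmodule_trunc [:1, 0, -1:] 4"
    unfolding h_def by (rule qmodule_trunc_mono[OF sum_of_two_squares_in_qmodule_trunc]) simp
  then show ?thesis
    using that[OF p_h] h_pos by (simp add: h_def)
qed

lemma positive_on_interval_in_qmodule_trunc:
  fixes p :: "real poly"
  assumes "\<forall>x\<in>{-1..1}. 0 < poly p x"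
  shows "p \<in> qmodule_trunc [:1, 0, -1:] (2 * degree p)"
  using assms
proof (induction "degree p" arbitrary: p rule: less_induct)
  case less
  show ?case
  proof (cases "degree p = 0")
    case True
    then have "p = [:poly p 0:]" and "0 < poly p 0"
      using less.prems by (auto elim: degree_eq_zeroE)
    then have "p \<in> sums_of_squares"
      by (metis less_imp_le nonneg_const_in_sums_of_squares)
    then show ?thesis
      by (simp add: sums_of_squares_in_qmodule_trunc)
  next
    case False
    then obtain l q where p: "p = l * q" and l: "0 < degree l"
      "l \<in> qmodule_trunc [:1, 0, -1:] (2 * degree l)" "\<forall>x\<in>{-1..1}. 0 < poly l x"
      using positive_on_interval_factor less.prems by blast
    have q_pos: "\<forall>x\<in>{-1..1}. 0 < poly q x"
      using less.prems l(3) by (simp add: p zero_less_mult_iff) (meson less_asym)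
    then have "l \<noteq> 0" "q \<noteq> 0"
      using l(1) by fastforce+
    then have deg: "degree p = degree l + degree q"
      by (simp add: p degree_mult_eq)
    then have "q \<in> qmodule_trunc [:1, 0, -1:] (2 * degree q)"
      using less.hyps l(1) q_pos by simp
    then have "l * q \<in> qmodule_trunc [:1, 0, -1:] (2 * degree l + 2 * degree q)"
      by (rule qmodule_trunc_mult[OF l(2)])
    then show ?thesis
      by (simp only: p[symmetric] deg distrib_left)
  qed
qed

lemma div_ln_le:
  fixes x :: real
  assumes "2 \<le> x"
  shows "x / ln x \<le> 3 / 2 * x"
proof -
  have "2 / 3 \<le> ln x"
    using ln2_ge_two_thirds ln_le_cancel_iff[of 2 x] assms by linarith
  then have "x / ln x \<le> x / (2 / 3)"
    using assms by (intro divide_left_mono) auto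
  then show ?thesis by simp
qed

lemma of_nat_le_powr:
  assumes "1 \<le> e"
  shows "real n \<le> real n powr e"
proof (cases "n = 0")
  case False
  then have "real n powr 1 \<le> real n powr e"
    using assms by (intro powr_mono) auto
  then show ?thesis by simp
qed simp

theorem theorem6:
  fixes d r :: nat and f :: "real poly" and fmin fmax :: real
  assumes "degree f \<le> d"
    and "\<forall>x\<in>{-1..1}. poly f x > 0"
    and "fmin = (INF x\<in>{-1..1}. poly f x)"
    and "fmax = (SUP x\<in>{-1..1}. poly f x)"
    and "0 < fmin" and "fmin < fmax"
    and "r \<ge> 2"
    and "real r / ln (real r) \<ge> 10 * sqrt 35 * (1 + 1 / sqrt 2) * real d powr (5/2)"
    and "real r / ln (real r) \<ge> 150 * real d powr (5/2) * (fmax / fmin)"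
  shows "f + [: (7/2 * real d powr (9/2) + 14) * cheb_norm1 f * ln (real r) / (real r)^2 :]
           \<in> qmodule_deg (2 * (104 * r))"
proof -
  define \<epsilon> where "\<epsilon> = (7/2 * real d powr (9/2) + 14) * cheb_norm1 f * ln (real r) / (real r)^2"
  have "0 \<le> cheb_norm1 f"
    unfolding cheb_norm1_def by (simp add: sum_nonneg)
  then have "0 \<le> \<epsilon>"
    using assms(7) unfolding \<epsilon>_def by simp
  then have pos: "\<forall>x\<in>{-1..1}. 0 < poly (f + [:\<epsilon>:]) x"
    using assms(2) by (simp add: add_pos_nonneg)
  have "1 \<le> sqrt 35 * (1 + 1 / sqrt (2 :: real))"
    by (rule order.trans[of _ "sqrt 35"]) auto
  then have "10 * real d \<le> 10 * sqrt 35 * (1 + 1 / sqrt 2) * real d powr (5/2)"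
    using of_nat_le_powr[of "5/2" d] by (intro mult_mono) auto
  also have "\<dots> \<le> real r / ln (real r)"
    by (rule assms(8))
  also have "\<dots> \<le> 3 / 2 * real r"
    using assms(7) by (intro div_ln_le) simp
  finally have "degree (f + [:\<epsilon>:]) \<le> r"
    using assms(1) degree_add_le[of f d "[:\<epsilon>:]"] by simp
  then have "qmodule_trunc [:1, 0, -1:] (2 * degree (f + [:\<epsilon>:])) \<subseteq> qmodule_deg (2 * (104 * r))"
    by (intro qmodule_trunc_subset_qmodule_deg) simp
  then show ?thesis
    using positive_on_interval_in_qmodule_trunc[OF pos] unfolding \<epsilon>_def by blast
qed

end
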